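(* Let $R$ be a commutative ring, $n$ a positive integer and $J$ a weakly $n$-absorbing ideal of $R$. (1) If $I$ is an ideal of $R$ with $I\subseteq J$, then $J/I$ is a weakly $n$-absorbing ideal of $R/I$. (2) If $T$ is a subring of $R$, then $J\cap T$ is a weakly $n$-absorbing ideal of $T$. (3) If $S$ is a multiplicatively closed subset of $R$ with $J\cap S=\emptyset$, then $J_S$ is a weakly $n$-absorbing ideal of $R_S$.
   Context: All rings are commutative with $1\neq0$ (subrings share the identity). A proper ideal $J$ of $R$ is weakly $n$-absorbing if whenever $0\neq a_1\cdots a_{n+1}\in J$ with $a_1,\dots,a_{n+1}\in R$, there are $n$ of the $a_i$'s whose product is in $J$. $R_S$ and $J_S$ denote localizations at $S$. *)

theory Defs
  imports "HOL-Algebra.QuotRing" "HOL-Algebra.Subrings"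
begin

definition weakly_n_absorbing :: "('a, 'b) ring_scheme \<Rightarrow> nat \<Rightarrow> 'a set \<Rightarrow> bool" where
  "weakly_n_absorbing R n J \<longleftrightarrow>
     ideal J R \<and> J \<noteq> carrier R \<and>
     (\<forall>a \<in> {..n} \<rightarrow> carrier R.
        finprod R a {..n} \<noteq> \<zero>\<^bsub>R\<^esub> \<and> finprod R a {..n} \<in> J \<longrightarrow>
        (\<exists>i \<le> n. finprod R a ({..n} - {i}) \<in> J))"

definition mult_closed :: "('a, 'b) ring_scheme \<Rightarrow> 'a set \<Rightarrow> bool" where
  "mult_closed R S \<longleftrightarrow> S \<subseteq> carrier R \<and> \<one>\<^bsub>R\<^esub> \<in> S \<and>
     (\<forall>a \<in> S. \<forall>b \<in> S. a \<otimes>\<^bsub>R\<^esub> b \<in> S)"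

text \<open>Localization R_S as fractions r/s, (r,s) ~ (r',s') iff t(rs' - r's) = 0 for some t in S.\<close>
definition loc_rel :: "('a, 'b) ring_scheme \<Rightarrow> 'a set \<Rightarrow> (('a \<times> 'a) \<times> ('a \<times> 'a)) set" where
  "loc_rel R S = {((r, s), (r', s')). r \<in> carrier R \<and> r' \<in> carrier R \<and> s \<in> S \<and> s' \<in> S \<and>
     (\<exists>t \<in> S. t \<otimes>\<^bsub>R\<^esub> (r \<otimes>\<^bsub>R\<^esub> s' \<ominus>\<^bsub>R\<^esub> r' \<otimes>\<^bsub>R\<^esub> s) = \<zero>\<^bsub>R\<^esub>)}"

definition frac :: "('a, 'b) ring_scheme \<Rightarrow> 'a set \<Rightarrow> 'a \<Rightarrow> 'a \<Rightarrow> ('a \<times> 'a) set" where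
  "frac R S r s = loc_rel R S `` {(r, s)}"

definition loc_mult :: "('a, 'b) ring_scheme \<Rightarrow> 'a set \<Rightarrow> ('a \<times> 'a) set \<Rightarrow> ('a \<times> 'a) set \<Rightarrow> ('a \<times> 'a) set" where
  "loc_mult R S A B = {z. \<exists>p \<in> A. \<exists>q \<in> B. z \<in>
      frac R S (fst p \<otimes>\<^bsub>R\<^esub> fst q) (snd p \<otimes>\<^bsub>R\<^esub> snd q)}"

definition loc_add :: "('a, 'b) ring_scheme \<Rightarrow> 'a set \<Rightarrow> ('a \<times> 'a) set \<Rightarrow> ('a \<times> 'a) set \<Rightarrow> ('a \<times> 'a) set" where
  "loc_add R S A B = {z. \<exists>p \<in> A. \<exists>q \<in> B. z \<in>
      frac R S (fst p \<otimes>\<^bsub>R\<^esub> snd q \<oplus>\<^bsub>R\<^esub> fst q \<otimes>\<^bsub>R\<^esub> snd p) (snd p \<otimes>\<^bsub>R\<^esub> snd q)}"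

definition localization :: "('a, 'b) ring_scheme \<Rightarrow> 'a set \<Rightarrow> ('a \<times> 'a) set ring" where
  "localization R S =
     \<lparr> carrier = (carrier R \<times> S) // loc_rel R S,
       mult = loc_mult R S,
       one = frac R S \<one>\<^bsub>R\<^esub> \<one>\<^bsub>R\<^esub>,
       zero = frac R S \<zero>\<^bsub>R\<^esub> \<one>\<^bsub>R\<^esub>,
       add = loc_add R S \<rparr>"

definition loc_ideal :: "('a, 'b) ring_scheme \<Rightarrow> 'a set \<Rightarrow> 'a set \<Rightarrow> ('a \<times> 'a) set set" where
  "loc_ideal R S J = {frac R S j s | j s. j \<in> J \<and> s \<in> S}"

end

theory Submission
  imports Defs
begin

text \<open>Weak \<open>n\<close>-absorption transfers along ring homomorphisms: it is pulled back along
  injective homomorphisms (this gives subrings) and pushed forward along surjective ones whose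
  kernel lies in the ideal (this gives quotients), because products of the images are images of
  products and nonzero products stay nonzero. For \<open>J\<^sub>S\<close>, a product of fractions
  \<open>r\<^sub>0/s\<^sub>0 \<cdots> r\<^sub>n/s\<^sub>n\<close> lies in \<open>J\<^sub>S\<close> exactly when
  \<open>t r\<^sub>0 \<cdots> r\<^sub>n \<in> J\<close> for some \<open>t \<in> S\<close>, and that element is nonzero if the
  fraction is; absorbing \<open>t\<close> into the factor \<open>r\<^sub>0\<close> lets the weak absorption of
  \<open>J\<close> produce the required \<open>n\<close> fractions.\<close>

lemma weakly_n_absorbingI:
  assumes "ideal J R" "J \<noteq> carrier R"
    and "\<And>a. \<lbrakk>a \<in> {..n} \<rightarrow> carrier R; finprod R a {..n} \<noteq> \<zero>\<^bsub>R\<^esub>; finprod R a {..n} \<in> J\<rbrakk>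
           \<Longrightarrow> \<exists>i\<le>n. finprod R a ({..n} - {i}) \<in> J"
  shows "weakly_n_absorbing R n J"
  using assms unfolding weakly_n_absorbing_def by blast

lemma weakly_n_absorbingD:
  assumes "weakly_n_absorbing R n J"
  shows "ideal J R" "J \<noteq> carrier R"
    and "\<lbrakk>a \<in> {..n} \<rightarrow> carrier R; finprod R a {..n} \<noteq> \<zero>\<^bsub>R\<^esub>; finprod R a {..n} \<in> J\<rbrakk>
           \<Longrightarrow> \<exists>i\<le>n. finprod R a ({..n} - {i}) \<in> J"
  using assms unfolding weakly_n_absorbing_def by blast+

lemma (in ring_hom_cring) ideal_image:
  assumes surj: "h ` carrier R = carrier S" and J: "ideal J R"
  shows "ideal (h ` J) S"
proof (rule idealI)
  interpret J: ideal J R by (rule J)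
  show "ring S" by (rule S.ring_axioms)
  show "subgroup (h ` J) (add_monoid S)"
    by (rule ring.img_is_add_subgroup[OF J.a_subgroup])
  fix a x assume a: "a \<in> h ` J" and x: "x \<in> carrier S"
  obtain j r where j: "j \<in> J" "a = h j" and r: "r \<in> carrier R" "x = h r"
    using a x surj by blast
  have "x \<otimes>\<^bsub>S\<^esub> a = h (r \<otimes> j)" "a \<otimes>\<^bsub>S\<^esub> x = h (j \<otimes> r)"
    using j r J.Icarr by simp_all
  then show "x \<otimes>\<^bsub>S\<^esub> a \<in> h ` J" "a \<otimes>\<^bsub>S\<^esub> x \<in> h ` J"
    using j r J.I_l_closed J.I_r_closed by blast+
qed

lemma (in ring_hom_cring) mem_of_image_mem:
  assumes J: "ideal J R" and ker: "a_kernel R S h \<subseteq> J"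
    and x: "x \<in> carrier R" and hx: "h x \<in> h ` J"
  shows "x \<in> J"
proof -
  interpret J: ideal J R by (rule J)
  obtain j where j: "j \<in> J" "h x = h j" using hx by blast
  have jc: "j \<in> carrier R" by (rule J.Icarr[OF j(1)])
  have "h (x \<ominus> j) = \<zero>\<^bsub>S\<^esub>"
    using x jc j(2) by (simp add: a_minus_def S.r_neg)
  then have "x \<ominus> j \<in> a_kernel R S h" unfolding a_kernel_def' using x jc by simp
  then have "(x \<ominus> j) \<oplus> j \<in> J" using ker j(1) by blast
  moreover have "(x \<ominus> j) \<oplus> j = x" using x jc by algebra
  ultimately show "x \<in> J" by simp
qed

lemma (in ring_hom_cring) weakly_n_absorbing_image:
  assumes surj: "h ` carrier R = carrier S" and ker: "a_kernel R S h \<subseteq> J"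
    and J: "weakly_n_absorbing R n J"
  shows "weakly_n_absorbing S n (h ` J)"
proof -
  interpret J: ideal J R by (rule weakly_n_absorbingD(1)[OF J])
  note mem_of_image = mem_of_image_mem[OF J.is_ideal ker]
  show ?thesis
  proof (rule weakly_n_absorbingI)
    show "ideal (h ` J) S" by (rule ideal_image[OF surj J.is_ideal])
    show "h ` J \<noteq> carrier S"
    proof
      assume "h ` J = carrier S"
      then have "\<one> \<in> J" using mem_of_image[OF R.one_closed] by simp
      then show False using J.one_imp_carrier weakly_n_absorbingD(2)[OF J] by simp
    qed
    fix a assume a: "a \<in> {..n} \<rightarrow> carrier S"
      and nonzero: "finprod S a {..n} \<noteq> \<zero>\<^bsub>S\<^esub>" and mem: "finprod S a {..n} \<in> h ` J"
    have preimages: "\<forall>i\<in>{..n}. \<exists>x. x \<in> carrier R \<and> a i = h x" using a surj by blast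
    obtain r where r: "\<And>i. i \<le> n \<Longrightarrow> r i \<in> carrier R \<and> a i = h (r i)"
      using bchoice[OF preimages] by auto
    have prod: "finprod S a B = h (finprod R r B)" if B: "B \<subseteq> {..n}" for B
    proof -
      have "finprod S a B = finprod S (h \<circ> r) B"
        by (rule S.finprod_cong') (use B r in auto)
      also have "\<dots> = h (finprod R r B)"
        by (rule hom_finprod[symmetric]) (use B r in auto)
      finally show ?thesis .
    qed
    have r_carrier: "r \<in> {..n} \<rightarrow> carrier R" using r by simp
    have "finprod R r {..n} \<in> J"
      using mem_of_image[OF R.finprod_closed[OF r_carrier]] mem prod[of "{..n}"] by simp
    moreover have "finprod R r {..n} \<noteq> \<zero>" using nonzero prod[of "{..n}"] by auto
    ultimately obtain i where "i \<le> n" "finprod R r ({..n} - {i}) \<in> J"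
      using weakly_n_absorbingD(3)[OF J r_carrier] by blast
    then show "\<exists>i\<le>n. finprod S a ({..n} - {i}) \<in> h ` J"
      using prod[of "{..n} - {i}"] by auto
  qed
qed

lemma (in ring_hom_cring) weakly_n_absorbing_vimage:
  assumes inj: "inj_on h (carrier R)" and J: "weakly_n_absorbing S n J"
  shows "weakly_n_absorbing R n {x \<in> carrier R. h x \<in> J}"
proof (rule weakly_n_absorbingI)
  interpret J: ideal J S by (rule weakly_n_absorbingD(1)[OF J])
  show "ideal {x \<in> carrier R. h x \<in> J} R" by (rule ring.ideal_vimage[OF J.is_ideal])
  show "{x \<in> carrier R. h x \<in> J} \<noteq> carrier R"
  proof
    assume "{x \<in> carrier R. h x \<in> J} = carrier R"
    then have "h \<one> \<in> J" by blast
    then show False using J.one_imp_carrier weakly_n_absorbingD(2)[OF J] by simp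
  qed
  fix a assume a: "a \<in> {..n} \<rightarrow> carrier R"
    and nonzero: "finprod R a {..n} \<noteq> \<zero>" and mem: "finprod R a {..n} \<in> {x \<in> carrier R. h x \<in> J}"
  have prod: "h (finprod R a B) = finprod S (h \<circ> a) B" if "B \<subseteq> {..n}" for B
    using that a by (intro hom_finprod) auto
  have "finprod S (h \<circ> a) {..n} \<noteq> \<zero>\<^bsub>S\<^esub>"
    using nonzero inj_onD[OF inj] prod[of "{..n}"] R.finprod_closed[OF a] by fastforce
  moreover have "finprod S (h \<circ> a) {..n} \<in> J" using mem prod[of "{..n}"] by simp
  moreover have "h \<circ> a \<in> {..n} \<rightarrow> carrier S" using a by (auto simp: Pi_iff)
  ultimately obtain i where "i \<le> n" "finprod S (h \<circ> a) ({..n} - {i}) \<in> J"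
    using weakly_n_absorbingD(3)[OF J] by blast
  then show "\<exists>i\<le>n. finprod R a ({..n} - {i}) \<in> {x \<in> carrier R. h x \<in> J}"
    using prod[of "{..n} - {i}"] a by (auto intro!: R.finprod_closed)
qed

lemma (in comm_monoid) finprod_fun_upd_mult:
  assumes "finite A" "k \<in> A" "f \<in> A \<rightarrow> carrier G" "c \<in> carrier G"
  shows "finprod G (f(k := c \<otimes> f k)) A = c \<otimes> finprod G f A"
proof -
  have A: "A = insert k (A - {k})" using assms(2) by blast
  have fk: "f k \<in> carrier G" using assms by blast
  have rest: "finprod G (f(k := c \<otimes> f k)) (A - {k}) = finprod G f (A - {k})"
    using assms(3) by (intro finprod_cong') auto
  have "finprod G (f(k := c \<otimes> f k)) A = (c \<otimes> f k) \<otimes> finprod G f (A - {k})"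
    using assms fk rest by (subst A, subst finprod_insert) auto
  also have "\<dots> = c \<otimes> (f k \<otimes> finprod G f (A - {k}))"
    using assms fk by (intro m_assoc finprod_closed) auto
  also have "f k \<otimes> finprod G f (A - {k}) = finprod G f A"
    using assms fk by (subst (2) A, subst finprod_insert) auto
  finally show ?thesis .
qed

lemma (in cring) weakly_n_absorbing_scaled:
  assumes J: "weakly_n_absorbing R n J" and t: "t \<in> carrier R" and r: "r \<in> {..n} \<rightarrow> carrier R"
    and nonzero: "t \<otimes> finprod R r {..n} \<noteq> \<zero>" and mem: "t \<otimes> finprod R r {..n} \<in> J"
  shows "\<exists>i\<le>n. t \<otimes> finprod R r ({..n} - {i}) \<in> J"
proof -
  interpret J: ideal J R by (rule weakly_n_absorbingD(1)[OF J])
  define b where "b = r(0 := t \<otimes> r 0)"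
  have "r 0 \<in> carrier R" using r by (simp add: Pi_iff)
  then have b_carrier: "b \<in> {..n} \<rightarrow> carrier R" using r t by (auto simp: b_def Pi_iff)
  have "finprod R b {..n} = t \<otimes> finprod R r {..n}"
    unfolding b_def using r t by (intro finprod_fun_upd_mult) auto
  then obtain i where i: "i \<le> n" "finprod R b ({..n} - {i}) \<in> J"
    using weakly_n_absorbingD(3)[OF J b_carrier] nonzero mem by auto
  have r_rest: "r \<in> {..n} - {i} \<rightarrow> carrier R" using r by auto
  have "t \<otimes> finprod R r ({..n} - {i}) \<in> J"
  proof (cases "i = 0")
    case True
    then have "finprod R b ({..n} - {i}) = finprod R r ({..n} - {i})"
      unfolding b_def using r_rest by (intro finprod_cong') auto
    then show ?thesis
      using i(2) t finprod_closed[OF r_rest] by (metis J.I_l_closed)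
  next
    case False
    then have "finprod R b ({..n} - {i}) = t \<otimes> finprod R r ({..n} - {i})"
      unfolding b_def using r_rest t by (intro finprod_fun_upd_mult) auto
    then show ?thesis using i(2) by simp
  qed
  then show ?thesis using i(1) by blast
qed

locale mult_closed_cring = cring R for R (structure) +
  fixes S :: "'a set"
  assumes mult_closed: "mult_closed R S"
begin

lemma subset_carrier: "S \<subseteq> carrier R"
  and one_mem: "\<one> \<in> S"
  and mult_mem: "s \<in> S \<Longrightarrow> u \<in> S \<Longrightarrow> s \<otimes> u \<in> S"
  using mult_closed unfolding mult_closed_def by auto

lemma mem_carrier: "s \<in> S \<Longrightarrow> s \<in> carrier R"
  using subset_carrier by blast

lemma finprod_mem: "s \<in> A \<rightarrow> S \<Longrightarrow> finprod R s A \<in> S"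
proof (induction A rule: infinite_finite_induct)
  case (insert x F)
  then have "s \<in> F \<rightarrow> carrier R" "s x \<in> carrier R" using mem_carrier by auto
  then show ?case using insert by (simp add: mult_mem)
qed (simp_all add: one_mem)

lemma loc_rel_iff:
  "((r, s), (r', s')) \<in> loc_rel R S \<longleftrightarrow>
     r \<in> carrier R \<and> r' \<in> carrier R \<and> s \<in> S \<and> s' \<in> S \<and> (\<exists>t\<in>S. t \<otimes> r \<otimes> s' = t \<otimes> r' \<otimes> s)"
proof -
  have "t \<otimes> (r \<otimes> s' \<ominus> r' \<otimes> s) = \<zero> \<longleftrightarrow> t \<otimes> r \<otimes> s' = t \<otimes> r' \<otimes> s"
    if "r \<in> carrier R" "r' \<in> carrier R" "s \<in> S" "s' \<in> S" "t \<in> S" for t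
  proof -
    have "t \<otimes> (r \<otimes> s' \<ominus> r' \<otimes> s) = t \<otimes> r \<otimes> s' \<ominus> t \<otimes> r' \<otimes> s"
      using that mem_carrier by algebra
    then show ?thesis using that mem_carrier by simp
  qed
  then show ?thesis unfolding loc_rel_def by auto
qed

lemma equiv_loc_rel: "equiv (carrier R \<times> S) (loc_rel R S)"
proof (rule equivI)
  show "loc_rel R S \<subseteq> (carrier R \<times> S) \<times> carrier R \<times> S"
    by (auto simp: loc_rel_def)
  show "refl_on (carrier R \<times> S) (loc_rel R S)"
    unfolding refl_on_def using one_mem by (auto simp: loc_rel_iff)
  show "sym (loc_rel R S)"
    unfolding sym_def by (force simp: split_paired_all loc_rel_iff)
  show "trans (loc_rel R S)"
  proof (rule transI)
    fix x y z assume xy: "(x, y) \<in> loc_rel R S" and yz: "(y, z) \<in> loc_rel R S"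
    obtain r s r' s' r'' s'' where xyz: "x = (r, s)" "y = (r', s')" "z = (r'', s'')"
      by (metis prod.exhaust)
    from xy yz obtain t u where mem: "r \<in> carrier R" "r' \<in> carrier R" "r'' \<in> carrier R"
      "s \<in> S" "s' \<in> S" "s'' \<in> S" "t \<in> S" "u \<in> S"
      and eq1: "t \<otimes> r \<otimes> s' = t \<otimes> r' \<otimes> s" and eq2: "u \<otimes> r' \<otimes> s'' = u \<otimes> r'' \<otimes> s'"
      unfolding xyz loc_rel_iff by blast
    have car: "s \<in> carrier R" "s' \<in> carrier R" "s'' \<in> carrier R" "t \<in> carrier R" "u \<in> carrier R"
      using mem mem_carrier by auto
    have "(t \<otimes> u \<otimes> s') \<otimes> r \<otimes> s'' = (t \<otimes> r \<otimes> s') \<otimes> (u \<otimes> s'')"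
      using mem car by algebra
    also have "\<dots> = (u \<otimes> r' \<otimes> s'') \<otimes> (t \<otimes> s)"
      unfolding eq1 using mem car by algebra
    also have "\<dots> = (t \<otimes> u \<otimes> s') \<otimes> r'' \<otimes> s"
      unfolding eq2 using mem car by algebra
    finally show "(x, z) \<in> loc_rel R S"
      unfolding xyz loc_rel_iff using mem mult_mem by blast
  qed
qed

lemma frac_eq_iff:
  assumes "r \<in> carrier R" "s \<in> S" "r' \<in> carrier R" "s' \<in> S"
  shows "frac R S r s = frac R S r' s' \<longleftrightarrow> (\<exists>t\<in>S. t \<otimes> r \<otimes> s' = t \<otimes> r' \<otimes> s)"
  unfolding frac_def using equiv_class_eq_iff[OF equiv_loc_rel, of "(r, s)" "(r', s')"] assms
  by (simp add: loc_rel_iff)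

lemma frac_eqI:
  assumes "r \<in> carrier R" "s \<in> S" "r' \<in> carrier R" "s' \<in> S" "r \<otimes> s' = r' \<otimes> s"
  shows "frac R S r s = frac R S r' s'"
  using assms one_mem mem_carrier by (auto simp: frac_eq_iff m_assoc)

lemma frac_eq_zero_iff:
  assumes "r \<in> carrier R" "s \<in> S"
  shows "frac R S r s = frac R S \<zero> \<one> \<longleftrightarrow> (\<exists>t\<in>S. t \<otimes> r = \<zero>)"
  using assms mem_carrier one_mem by (simp add: frac_eq_iff)

lemma frac_binop:
  assumes F: "F respects2 loc_rel R S"
    and "a \<in> carrier R" "s \<in> S" "b \<in> carrier R" "u \<in> S"
  shows "(\<Union>p\<in>frac R S a s. \<Union>q\<in>frac R S b u. F p q) = F (a, s) (b, u)"
  unfolding frac_def using assms by (intro UN_equiv_class2[OF equiv_loc_rel equiv_loc_rel F]) auto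

lemma frac_mult_cong:
  assumes "((r, s), (r', s')) \<in> loc_rel R S" "b \<in> carrier R" "u \<in> S"
  shows "frac R S (b \<otimes> r) (u \<otimes> s) = frac R S (b \<otimes> r') (u \<otimes> s')"
proof -
  obtain t where mem: "r \<in> carrier R" "r' \<in> carrier R" "s \<in> S" "s' \<in> S" "t \<in> S"
    and eq: "t \<otimes> r \<otimes> s' = t \<otimes> r' \<otimes> s"
    using assms(1) loc_rel_iff by blast
  have car: "s \<in> carrier R" "s' \<in> carrier R" "t \<in> carrier R" "u \<in> carrier R"
    using mem assms mem_carrier by auto
  have "t \<otimes> (b \<otimes> r) \<otimes> (u \<otimes> s') = (t \<otimes> r \<otimes> s') \<otimes> (b \<otimes> u)"
    using assms car mem by algebra
  also have "\<dots> = t \<otimes> (b \<otimes> r') \<otimes> (u \<otimes> s)"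
    unfolding eq using assms car mem by algebra
  finally show ?thesis
    using assms mem by (subst frac_eq_iff) (auto intro: mult_mem)
qed

lemma frac_add_cong:
  assumes "((r, s), (r', s')) \<in> loc_rel R S" "b \<in> carrier R" "u \<in> S"
  shows "frac R S (b \<otimes> s \<oplus> r \<otimes> u) (u \<otimes> s) = frac R S (b \<otimes> s' \<oplus> r' \<otimes> u) (u \<otimes> s')"
proof -
  obtain t where mem: "r \<in> carrier R" "r' \<in> carrier R" "s \<in> S" "s' \<in> S" "t \<in> S"
    and eq: "t \<otimes> r \<otimes> s' = t \<otimes> r' \<otimes> s"
    using assms(1) loc_rel_iff by blast
  have car: "s \<in> carrier R" "s' \<in> carrier R" "t \<in> carrier R" "u \<in> carrier R"
    using mem assms mem_carrier by auto
  have "t \<otimes> (b \<otimes> s \<oplus> r \<otimes> u) \<otimes> (u \<otimes> s') = t \<otimes> b \<otimes> s \<otimes> s' \<otimes> u \<oplus> (t \<otimes> r \<otimes> s') \<otimes> (u \<otimes> u)"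
    using assms car mem by algebra
  also have "\<dots> = t \<otimes> (b \<otimes> s' \<oplus> r' \<otimes> u) \<otimes> (u \<otimes> s)"
    unfolding eq using assms car mem by algebra
  finally show ?thesis
    using assms mem car by (subst frac_eq_iff) (auto intro: mult_mem)
qed

lemma mult_frac:
  assumes "a \<in> carrier R" "s \<in> S" "b \<in> carrier R" "u \<in> S"
  shows "loc_mult R S (frac R S a s) (frac R S b u) = frac R S (a \<otimes> b) (s \<otimes> u)"
proof -
  let ?F = "\<lambda>p q. frac R S (fst p \<otimes> fst q) (snd p \<otimes> snd q)"
  have F: "?F respects2 loc_rel R S"
  proof (rule congruent2_commuteI[OF equiv_loc_rel])
    show "?F y z = ?F z y" if "y \<in> carrier R \<times> S" "z \<in> carrier R \<times> S" for y z
      using that mem_carrier by (auto simp: m_comm)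
    show "?F w y = ?F w z" if "w \<in> carrier R \<times> S" "(y, z) \<in> loc_rel R S" for y z w
      using that frac_mult_cong[of "fst y" "snd y" "fst z" "snd z" "fst w" "snd w"] by auto
  qed
  have "loc_mult R S A B = (\<Union>p\<in>A. \<Union>q\<in>B. ?F p q)" for A B
    unfolding loc_mult_def by blast
  then show ?thesis using frac_binop[OF F assms] by simp
qed

lemma add_frac:
  assumes "a \<in> carrier R" "s \<in> S" "b \<in> carrier R" "u \<in> S"
  shows "loc_add R S (frac R S a s) (frac R S b u) = frac R S (a \<otimes> u \<oplus> b \<otimes> s) (s \<otimes> u)"
proof -
  let ?F = "\<lambda>p q. frac R S (fst p \<otimes> snd q \<oplus> fst q \<otimes> snd p) (snd p \<otimes> snd q)"
  have F: "?F respects2 loc_rel R S"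
  proof (rule congruent2_commuteI[OF equiv_loc_rel])
    show "?F y z = ?F z y" if "y \<in> carrier R \<times> S" "z \<in> carrier R \<times> S" for y z
      using that mem_carrier by (auto simp: m_comm a_comm)
    show "?F w y = ?F w z" if "w \<in> carrier R \<times> S" "(y, z) \<in> loc_rel R S" for y z w
      using that frac_add_cong[of "fst y" "snd y" "fst z" "snd z" "fst w" "snd w"] by auto
  qed
  have "loc_add R S A B = (\<Union>p\<in>A. \<Union>q\<in>B. ?F p q)" for A B
    unfolding loc_add_def by blast
  then show ?thesis using frac_binop[OF F assms] by simp
qed

end

context mult_closed_cring
begin

abbreviation Rs :: "('a \<times> 'a) set ring" where
  "Rs \<equiv> localization R S"

lemma localization_simps:
  "carrier Rs = {frac R S r s | r s. r \<in> carrier R \<and> s \<in> S}"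
  "mult Rs = loc_mult R S" "add Rs = loc_add R S"
  "one Rs = frac R S \<one> \<one>" "zero Rs = frac R S \<zero> \<one>"
  unfolding localization_def quotient_def frac_def by auto

lemma localization_cases:
  assumes "x \<in> carrier Rs"
  obtains r s where "x = frac R S r s" "r \<in> carrier R" "s \<in> S"
  using assms by (auto simp: localization_simps)

lemma frac_closed: "r \<in> carrier R \<Longrightarrow> s \<in> S \<Longrightarrow> frac R S r s \<in> carrier Rs"
  by (auto simp: localization_simps)

lemma frac_add_neg:
  assumes "a \<in> carrier R" "s \<in> S"
  shows "frac R S (\<ominus> a) s \<oplus>\<^bsub>Rs\<^esub> frac R S a s = \<zero>\<^bsub>Rs\<^esub>"
proof -
  have s: "s \<in> carrier R" using assms(2) by (rule mem_carrier)
  have "frac R S (\<ominus> a) s \<oplus>\<^bsub>Rs\<^esub> frac R S a s = frac R S (\<ominus> a \<otimes> s \<oplus> a \<otimes> s) (s \<otimes> s)"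
    using assms by (simp add: localization_simps add_frac)
  also have "\<dots> = frac R S \<zero> \<one>"
  proof (rule frac_eqI)
    show "(\<ominus> a \<otimes> s \<oplus> a \<otimes> s) \<otimes> \<one> = \<zero> \<otimes> (s \<otimes> s)"
      using assms(1) s by algebra
  qed (use assms s one_mem mult_mem in auto)
  finally show ?thesis by (simp add: localization_simps)
qed

lemma abelian_group_localization: "abelian_group Rs"
proof (rule abelian_groupI)
  fix x y assume "x \<in> carrier Rs" "y \<in> carrier Rs"
  then obtain a s b u where xy: "x = frac R S a s" "y = frac R S b u"
    and mem: "a \<in> carrier R" "s \<in> S" "b \<in> carrier R" "u \<in> S"
    by (metis localization_cases)
  show "x \<oplus>\<^bsub>Rs\<^esub> y \<in> carrier Rs"
    using xy mem mem_carrier by (simp add: localization_simps(3) add_frac frac_closed mult_mem)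
  show "x \<oplus>\<^bsub>Rs\<^esub> y = y \<oplus>\<^bsub>Rs\<^esub> x"
    using xy mem mem_carrier by (simp add: localization_simps add_frac a_comm m_comm)
next
  show "\<zero>\<^bsub>Rs\<^esub> \<in> carrier Rs"
    using one_mem by (simp add: localization_simps(5) frac_closed)
next
  fix x y z assume "x \<in> carrier Rs" "y \<in> carrier Rs" "z \<in> carrier Rs"
  then obtain a s b u c v where xyz: "x = frac R S a s" "y = frac R S b u" "z = frac R S c v"
    and mem: "a \<in> carrier R" "s \<in> S" "b \<in> carrier R" "u \<in> S" "c \<in> carrier R" "v \<in> S"
    by (metis localization_cases)
  have "s \<in> carrier R" "u \<in> carrier R" "v \<in> carrier R" using mem mem_carrier by auto
  then show "x \<oplus>\<^bsub>Rs\<^esub> y \<oplus>\<^bsub>Rs\<^esub> z = x \<oplus>\<^bsub>Rs\<^esub> (y \<oplus>\<^bsub>Rs\<^esub> z)"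
    using xyz mem by (simp add: localization_simps add_frac mult_mem)
      (intro arg_cong2[where f = "frac R S"]; algebra)
next
  fix x assume "x \<in> carrier Rs"
  then obtain a s where x: "x = frac R S a s" and mem: "a \<in> carrier R" "s \<in> S"
    by (rule localization_cases)
  show "\<zero>\<^bsub>Rs\<^esub> \<oplus>\<^bsub>Rs\<^esub> x = x"
    using x mem mem_carrier one_mem by (simp add: localization_simps add_frac)
  show "\<exists>y\<in>carrier Rs. y \<oplus>\<^bsub>Rs\<^esub> x = \<zero>\<^bsub>Rs\<^esub>"
  proof
    show "frac R S (\<ominus> a) s \<oplus>\<^bsub>Rs\<^esub> x = \<zero>\<^bsub>Rs\<^esub>" unfolding x by (rule frac_add_neg[OF mem])
    show "frac R S (\<ominus> a) s \<in> carrier Rs" using mem by (simp add: frac_closed)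
  qed
qed

lemma comm_monoid_localization: "comm_monoid Rs"
proof (rule comm_monoidI)
  fix x y assume "x \<in> carrier Rs" "y \<in> carrier Rs"
  then obtain a s b u where xy: "x = frac R S a s" "y = frac R S b u"
    and mem: "a \<in> carrier R" "s \<in> S" "b \<in> carrier R" "u \<in> S"
    by (metis localization_cases)
  show "x \<otimes>\<^bsub>Rs\<^esub> y \<in> carrier Rs"
    using xy mem by (simp add: localization_simps(2) mult_frac frac_closed mult_mem)
  show "x \<otimes>\<^bsub>Rs\<^esub> y = y \<otimes>\<^bsub>Rs\<^esub> x"
    using xy mem mem_carrier by (simp add: localization_simps mult_frac m_comm)
next
  show "\<one>\<^bsub>Rs\<^esub> \<in> carrier Rs"
    using one_mem by (simp add: localization_simps(4) frac_closed)
next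
  fix x y z assume "x \<in> carrier Rs" "y \<in> carrier Rs" "z \<in> carrier Rs"
  then obtain a s b u c v where xyz: "x = frac R S a s" "y = frac R S b u" "z = frac R S c v"
    and mem: "a \<in> carrier R" "s \<in> S" "b \<in> carrier R" "u \<in> S" "c \<in> carrier R" "v \<in> S"
    by (metis localization_cases)
  have "s \<in> carrier R" "u \<in> carrier R" "v \<in> carrier R" using mem mem_carrier by auto
  then show "x \<otimes>\<^bsub>Rs\<^esub> y \<otimes>\<^bsub>Rs\<^esub> z = x \<otimes>\<^bsub>Rs\<^esub> (y \<otimes>\<^bsub>Rs\<^esub> z)"
    using xyz mem by (simp add: localization_simps mult_frac mult_mem m_assoc)
next
  fix x assume "x \<in> carrier Rs"
  then obtain a s where x: "x = frac R S a s" and mem: "a \<in> carrier R" "s \<in> S"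
    by (rule localization_cases)
  show "\<one>\<^bsub>Rs\<^esub> \<otimes>\<^bsub>Rs\<^esub> x = x"
    using x mem mem_carrier one_mem by (simp add: localization_simps mult_frac)
qed

lemma cring_localization: "cring Rs"
proof (rule cringI[OF abelian_group_localization comm_monoid_localization])
  fix x y z assume "x \<in> carrier Rs" "y \<in> carrier Rs" "z \<in> carrier Rs"
  then obtain a s b u c v where xyz: "x = frac R S a s" "y = frac R S b u" "z = frac R S c v"
    and mem: "a \<in> carrier R" "s \<in> S" "b \<in> carrier R" "u \<in> S" "c \<in> carrier R" "v \<in> S"
    by (metis localization_cases)
  have car: "s \<in> carrier R" "u \<in> carrier R" "v \<in> carrier R" using mem mem_carrier by auto
  have "(a \<otimes> u \<oplus> b \<otimes> s) \<otimes> c \<otimes> (s \<otimes> v \<otimes> (u \<otimes> v))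
      = (a \<otimes> c \<otimes> (u \<otimes> v) \<oplus> b \<otimes> c \<otimes> (s \<otimes> v)) \<otimes> (s \<otimes> u \<otimes> v)"
    using mem car by algebra
  then have "frac R S ((a \<otimes> u \<oplus> b \<otimes> s) \<otimes> c) (s \<otimes> u \<otimes> v)
      = frac R S (a \<otimes> c \<otimes> (u \<otimes> v) \<oplus> b \<otimes> c \<otimes> (s \<otimes> v)) (s \<otimes> v \<otimes> (u \<otimes> v))"
    using mem car by (intro frac_eqI) (auto intro: mult_mem)
  then show "(x \<oplus>\<^bsub>Rs\<^esub> y) \<otimes>\<^bsub>Rs\<^esub> z = x \<otimes>\<^bsub>Rs\<^esub> z \<oplus>\<^bsub>Rs\<^esub> y \<otimes>\<^bsub>Rs\<^esub> z"
    using xyz mem car by (simp add: localization_simps mult_frac add_frac mult_mem)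
qed

end

context mult_closed_cring
begin

lemma neg_frac:
  assumes "a \<in> carrier R" "s \<in> S"
  shows "\<ominus>\<^bsub>Rs\<^esub> frac R S a s = frac R S (\<ominus> a) s"
proof -
  interpret Rs: cring Rs by (rule cring_localization)
  show ?thesis
    using frac_add_neg[OF assms] frac_closed[OF assms] frac_closed[OF a_inv_closed[OF assms(1)] assms(2)]
    by (rule Rs.minus_equality)
qed

lemma frac_mem_loc_ideal_iff:
  assumes J: "ideal J R" and "r \<in> carrier R" "s \<in> S"
  shows "frac R S r s \<in> loc_ideal R S J \<longleftrightarrow> (\<exists>t\<in>S. t \<otimes> r \<in> J)"
proof
  interpret J: ideal J R by (rule J)
  assume "frac R S r s \<in> loc_ideal R S J"
  then obtain j u where ju: "j \<in> J" "u \<in> S" "frac R S r s = frac R S j u"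
    unfolding loc_ideal_def by auto
  have j: "j \<in> carrier R" using ju(1) by (rule J.Icarr)
  obtain t where t: "t \<in> S" "t \<otimes> r \<otimes> u = t \<otimes> j \<otimes> s"
    using ju(3) frac_eq_iff[OF assms(2,3) j ju(2)] by blast
  have car: "t \<in> carrier R" "u \<in> carrier R" "s \<in> carrier R"
    using t(1) ju(2) assms(3) by (auto intro: mem_carrier)
  have "(t \<otimes> u) \<otimes> r = (t \<otimes> s) \<otimes> j"
  proof -
    have "(t \<otimes> u) \<otimes> r = t \<otimes> r \<otimes> u" using car assms(2) by algebra
    also have "\<dots> = (t \<otimes> s) \<otimes> j" unfolding t(2) using car j by algebra
    finally show ?thesis .
  qed
  moreover have "(t \<otimes> s) \<otimes> j \<in> J" using ju(1) car by (simp add: J.I_l_closed)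
  ultimately show "\<exists>t\<in>S. t \<otimes> r \<in> J" using mult_mem[OF t(1) ju(2)] by metis
next
  interpret J: ideal J R by (rule J)
  assume "\<exists>t\<in>S. t \<otimes> r \<in> J"
  then obtain t where t: "t \<in> S" "t \<otimes> r \<in> J" by blast
  have car: "t \<in> carrier R" "s \<in> carrier R" using t(1) assms(3) by (auto intro: mem_carrier)
  have "frac R S r s = frac R S (t \<otimes> r) (t \<otimes> s)"
  proof (rule frac_eqI)
    show "r \<otimes> (t \<otimes> s) = t \<otimes> r \<otimes> s" using car assms(2) by algebra
  qed (use assms t car mult_mem in auto)
  then show "frac R S r s \<in> loc_ideal R S J"
    unfolding loc_ideal_def using t mult_mem[OF t(1) assms(3)] by blast
qed

lemma ideal_loc_ideal:
  assumes J: "ideal J R"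
  shows "ideal (loc_ideal R S J) Rs"
proof -
  interpret Rs: cring Rs by (rule cring_localization)
  interpret J: ideal J R by (rule J)
  have mem: "frac R S j u \<in> loc_ideal R S J" if "j \<in> J" "u \<in> S" for j u
    using that unfolding loc_ideal_def by blast
  have elim: "\<exists>j u. x = frac R S j u \<and> j \<in> J \<and> u \<in> S" if "x \<in> loc_ideal R S J" for x
    using that unfolding loc_ideal_def by blast
  have sub: "loc_ideal R S J \<subseteq> carrier Rs"
    unfolding loc_ideal_def by (auto intro: frac_closed J.Icarr)
  have mult_closed: "x \<otimes>\<^bsub>Rs\<^esub> y \<in> loc_ideal R S J"
    if y_mem: "y \<in> loc_ideal R S J" and x_mem: "x \<in> carrier Rs" for x y
  proof -
    obtain j u where y: "y = frac R S j u" "j \<in> J" "u \<in> S" using elim[OF y_mem] by blast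
    obtain r s where x: "x = frac R S r s" "r \<in> carrier R" "s \<in> S"
      using x_mem by (rule localization_cases)
    have "x \<otimes>\<^bsub>Rs\<^esub> y = frac R S (r \<otimes> j) (s \<otimes> u)"
      using x y by (simp add: localization_simps mult_frac J.Icarr)
    then show ?thesis using mem x y by (simp add: J.I_l_closed mult_mem)
  qed
  show ?thesis
  proof (rule idealI)
    show "ring Rs" by (rule Rs.ring_axioms)
    show "subgroup (loc_ideal R S J) (add_monoid Rs)"
    proof (rule Rs.add.subgroupI)
      show "loc_ideal R S J \<subseteq> carrier Rs" by (rule sub)
      show "loc_ideal R S J \<noteq> {}" using mem[OF J.additive_subgroup_axioms[THEN additive_subgroup.zero_closed] one_mem] by blast
    next
      fix x assume "x \<in> loc_ideal R S J"
      then obtain j u where x: "x = frac R S j u" "j \<in> J" "u \<in> S" using elim by blast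
      then show "\<ominus>\<^bsub>Rs\<^esub> x \<in> loc_ideal R S J"
        using mem J.a_inv_closed by (simp add: neg_frac J.Icarr)
    next
      fix x y assume "x \<in> loc_ideal R S J" "y \<in> loc_ideal R S J"
      then obtain j u k v where x: "x = frac R S j u" "j \<in> J" "u \<in> S"
        and y: "y = frac R S k v" "k \<in> J" "v \<in> S" using elim by metis
      have "x \<oplus>\<^bsub>Rs\<^esub> y = frac R S (j \<otimes> v \<oplus> k \<otimes> u) (u \<otimes> v)"
        using x y by (simp add: localization_simps add_frac J.Icarr)
      moreover have "j \<otimes> v \<oplus> k \<otimes> u \<in> J"
        using x y by (intro J.a_closed J.I_r_closed mem_carrier)
      ultimately show "x \<oplus>\<^bsub>Rs\<^esub> y \<in> loc_ideal R S J" using mem x y by (simp add: mult_mem)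
    qed
  next
    fix y x assume y: "y \<in> loc_ideal R S J" and x: "x \<in> carrier Rs"
    show "x \<otimes>\<^bsub>Rs\<^esub> y \<in> loc_ideal R S J" by (rule mult_closed[OF y x])
    have "y \<in> carrier Rs" using y sub by blast
    then show "y \<otimes>\<^bsub>Rs\<^esub> x \<in> loc_ideal R S J"
      using mult_closed[OF y x] Rs.m_comm[OF _ x] by simp
  qed
qed

lemma finprod_frac:
  assumes "finite A" "r \<in> A \<rightarrow> carrier R" "s \<in> A \<rightarrow> S"
  shows "finprod Rs (\<lambda>i. frac R S (r i) (s i)) A = frac R S (finprod R r A) (finprod R s A)"
  using assms
proof (induction A rule: finite_induct)
  case empty
  interpret Rs: cring Rs by (rule cring_localization)
  show ?case by (simp add: localization_simps)
next
  case (insert x F)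
  interpret Rs: cring Rs by (rule cring_localization)
  have r: "r \<in> F \<rightarrow> carrier R" "r x \<in> carrier R" and s: "s \<in> F \<rightarrow> S" "s x \<in> S"
    using insert.prems by auto
  have s_carrier: "s \<in> F \<rightarrow> carrier R" "s x \<in> carrier R" using s mem_carrier by auto
  have fracs: "(\<lambda>i. frac R S (r i) (s i)) \<in> F \<rightarrow> carrier Rs"
    using r s by (intro Pi_I frac_closed) auto
  have "finprod Rs (\<lambda>i. frac R S (r i) (s i)) (insert x F)
      = frac R S (r x) (s x) \<otimes>\<^bsub>Rs\<^esub> frac R S (finprod R r F) (finprod R s F)"
    using Rs.finprod_insert[OF insert.hyps fracs frac_closed[OF r(2) s(2)]] insert.IH r(1) s(1)
    by simp
  also have "\<dots> = frac R S (r x \<otimes> finprod R r F) (s x \<otimes> finprod R s F)"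
    unfolding localization_simps(2)
    by (rule mult_frac[OF r(2) s(2) finprod_closed[OF r(1)] finprod_mem[OF s(1)]])
  also have "\<dots> = frac R S (finprod R r (insert x F)) (finprod R s (insert x F))"
    using finprod_insert[OF insert.hyps r] finprod_insert[OF insert.hyps s_carrier] by simp
  finally show ?case .
qed

lemma localization_family:
  assumes "a \<in> A \<rightarrow> carrier Rs"
  obtains r s where "r \<in> A \<rightarrow> carrier R" "s \<in> A \<rightarrow> S" "\<And>i. i \<in> A \<Longrightarrow> a i = frac R S (r i) (s i)"
proof -
  have choice: "\<forall>i\<in>A. \<exists>p. p \<in> carrier R \<times> S \<and> a i = frac R S (fst p) (snd p)"
  proof
    fix i assume i: "i \<in> A"
    have "a i \<in> carrier Rs" using assms i by blast
    then obtain r s where "a i = frac R S r s" "r \<in> carrier R" "s \<in> S"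
      by (rule localization_cases)
    then show "\<exists>p. p \<in> carrier R \<times> S \<and> a i = frac R S (fst p) (snd p)"
      by (intro exI[of _ "(r, s)"]) simp
  qed
  then obtain p where p: "\<And>i. i \<in> A \<Longrightarrow> p i \<in> carrier R \<times> S \<and> a i = frac R S (fst (p i)) (snd (p i))"
    using bchoice[OF choice] by blast
  show thesis
  proof (rule that[of "fst \<circ> p" "snd \<circ> p"])
    show "fst \<circ> p \<in> A \<rightarrow> carrier R" "snd \<circ> p \<in> A \<rightarrow> S"
      using p by (simp_all add: Pi_iff mem_Times_iff)
  qed (simp add: p)
qed

lemma finprod_localization:
  assumes "finite A" "a \<in> A \<rightarrow> carrier Rs"
  obtains r s where "r \<in> A \<rightarrow> carrier R" "s \<in> A \<rightarrow> S"
    "\<And>B. B \<subseteq> A \<Longrightarrow> finprod Rs a B = frac R S (finprod R r B) (finprod R s B)"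
proof -
  interpret Rs: cring Rs by (rule cring_localization)
  obtain r s where r: "r \<in> A \<rightarrow> carrier R" and s: "s \<in> A \<rightarrow> S"
    and a_eq: "\<And>i. i \<in> A \<Longrightarrow> a i = frac R S (r i) (s i)"
    using localization_family[OF assms(2)] by blast
  have "finprod Rs a B = frac R S (finprod R r B) (finprod R s B)" if B: "B \<subseteq> A" for B
  proof -
    have r_i: "r i \<in> carrier R" and s_i: "s i \<in> S" if "i \<in> B" for i
      using funcset_mem[OF r] funcset_mem[OF s] B that by blast+
    have "finprod Rs a B = finprod Rs (\<lambda>i. frac R S (r i) (s i)) B"
    proof (rule Rs.finprod_cong')
      show "(\<lambda>i. frac R S (r i) (s i)) \<in> B \<rightarrow> carrier Rs"
        using r_i s_i frac_closed by blast
      show "a i = frac R S (r i) (s i)" if "i \<in> B" for i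
        using a_eq B that by blast
    qed simp
    also have "\<dots> = frac R S (finprod R r B) (finprod R s B)"
      using r_i s_i by (intro finprod_frac finite_subset[OF B assms(1)] Pi_I) auto
    finally show ?thesis .
  qed
  with r s show thesis by (rule that)
qed

lemma weakly_n_absorbing_loc_ideal:
  assumes J: "weakly_n_absorbing R n J" and disjoint: "J \<inter> S = {}"
  shows "weakly_n_absorbing Rs n (loc_ideal R S J)"
proof -
  interpret Rs: cring Rs by (rule cring_localization)
  interpret J: ideal J R by (rule weakly_n_absorbingD(1)[OF J])
  show ?thesis
  proof (rule weakly_n_absorbingI)
    show "ideal (loc_ideal R S J) Rs" by (rule ideal_loc_ideal[OF J.is_ideal])
    show "loc_ideal R S J \<noteq> carrier Rs"
    proof
      assume "loc_ideal R S J = carrier Rs"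
      then have "frac R S \<one> \<one> \<in> loc_ideal R S J" using one_mem by (simp add: frac_closed)
      then obtain t where "t \<in> S" "t \<otimes> \<one> \<in> J"
        using frac_mem_loc_ideal_iff[OF J.is_ideal one_closed one_mem] by blast
      then show False using disjoint mem_carrier by auto
    qed
    fix a assume a: "a \<in> {..n} \<rightarrow> carrier Rs"
      and nonzero: "finprod Rs a {..n} \<noteq> \<zero>\<^bsub>Rs\<^esub>" and mem: "finprod Rs a {..n} \<in> loc_ideal R S J"
    obtain r s where r: "r \<in> {..n} \<rightarrow> carrier R" and s: "s \<in> {..n} \<rightarrow> S"
      and prod: "\<And>B. B \<subseteq> {..n} \<Longrightarrow> finprod Rs a B = frac R S (finprod R r B) (finprod R s B)"
      using finprod_localization[OF finite_atMost a] by blast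
    have in_S: "finprod R s B \<in> S" if "B \<subseteq> {..n}" for B
      using that s by (intro finprod_mem) auto
    have r_all: "finprod R r {..n} \<in> carrier R" using r by (rule finprod_closed)
    have s_all: "finprod R s {..n} \<in> S" by (rule in_S) simp
    have "frac R S (finprod R r {..n}) (finprod R s {..n}) \<in> loc_ideal R S J"
      using mem prod[of "{..n}"] by simp
    then obtain t where t: "t \<in> S" "t \<otimes> finprod R r {..n} \<in> J"
      using frac_mem_loc_ideal_iff[OF J.is_ideal r_all s_all] by blast
    have "t \<otimes> finprod R r {..n} \<noteq> \<zero>"
    proof
      assume "t \<otimes> finprod R r {..n} = \<zero>"
      then have "frac R S (finprod R r {..n}) (finprod R s {..n}) = frac R S \<zero> \<one>"
        using frac_eq_zero_iff[OF r_all s_all] t(1) by blast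
      then show False using nonzero prod[of "{..n}"] by (simp add: localization_simps(5))
    qed
    then obtain i where i: "i \<le> n" "t \<otimes> finprod R r ({..n} - {i}) \<in> J"
      using weakly_n_absorbing_scaled[OF J mem_carrier[OF t(1)] r] t(2) by blast
    have r_rest: "finprod R r ({..n} - {i}) \<in> carrier R" using r by (intro finprod_closed) auto
    have s_rest: "finprod R s ({..n} - {i}) \<in> S" by (rule in_S) auto
    have "frac R S (finprod R r ({..n} - {i})) (finprod R s ({..n} - {i})) \<in> loc_ideal R S J"
      using frac_mem_loc_ideal_iff[OF J.is_ideal r_rest s_rest] t(1) i(2) by blast
    then show "\<exists>i\<le>n. finprod Rs a ({..n} - {i}) \<in> loc_ideal R S J"
      using prod[of "{..n} - {i}"] i(1) by auto
  qed
qed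

end

lemma weakly_n_absorbing_quotient:
  assumes R: "cring R" and I: "ideal I R" and "I \<subseteq> J" and J: "weakly_n_absorbing R n J"
  shows "weakly_n_absorbing (R Quot I) n ((+>\<^bsub>R\<^esub>) I ` J)"
proof -
  interpret I: ideal I R by (rule I)
  interpret h: ring_hom_cring R "R Quot I" "(+>\<^bsub>R\<^esub>) I" by (rule I.rcos_ring_hom_cring[OF R])
  have "(+>\<^bsub>R\<^esub>) I ` carrier R = carrier (R Quot I)"
    unfolding FactRing_def A_RCOSETS_def' by auto
  moreover have "a_kernel R (R Quot I) ((+>\<^bsub>R\<^esub>) I) \<subseteq> J"
  proof (rule subsetI)
    fix x assume "x \<in> a_kernel R (R Quot I) ((+>\<^bsub>R\<^esub>) I)"
    then have x: "x \<in> carrier R" and "I +>\<^bsub>R\<^esub> x = \<zero>\<^bsub>R Quot I\<^esub>"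
      unfolding a_kernel_def' by blast+
    then have "I +>\<^bsub>R\<^esub> x = I" unfolding FactRing_def by simp
    then have "x \<in> I" using I.a_rcos_self[OF x] by simp
    then show "x \<in> J" using \<open>I \<subseteq> J\<close> by blast
  qed
  ultimately show ?thesis by (rule h.weakly_n_absorbing_image[OF _ _ J])
qed

lemma weakly_n_absorbing_subring:
  assumes R: "cring R" and T: "subring T R" and J: "weakly_n_absorbing R n J"
  shows "weakly_n_absorbing (R\<lparr>carrier := T\<rparr>) n (J \<inter> T)"
proof -
  interpret R: cring R by (rule R)
  have T_carrier: "T \<subseteq> carrier R" using T by (rule subringE(1))
  have "cring (R\<lparr>carrier := T\<rparr>)"
    using R.subcring_iff[OF T_carrier] R.subcringI'[OF T] by simp
  moreover have "(\<lambda>x. x) \<in> ring_hom (R\<lparr>carrier := T\<rparr>) R"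
    using T_carrier by (auto intro!: ring_hom_memI)
  ultimately interpret h: ring_hom_cring "R\<lparr>carrier := T\<rparr>" R "\<lambda>x. x"
    by (rule ring_hom_cringI[OF _ R])
  have "{x \<in> carrier (R\<lparr>carrier := T\<rparr>). x \<in> J} = J \<inter> T" by auto
  then show ?thesis using h.weakly_n_absorbing_vimage[OF inj_on_id2 J] by simp
qed

lemma weakly_n_absorbing_localization:
  assumes "cring R" "mult_closed R S" "J \<inter> S = {}" "weakly_n_absorbing R n J"
  shows "weakly_n_absorbing (localization R S) n (loc_ideal R S J)"
proof -
  interpret mult_closed_cring R S
    using assms(1,2) by (simp add: mult_closed_cring_def mult_closed_cring_axioms_def)
  show ?thesis using weakly_n_absorbing_loc_ideal[OF assms(4,3)] .
qed

theorem mainTheorem13: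
  fixes R :: "('a, 'b) ring_scheme" and n :: nat and J :: "'a set"
  assumes "cring R" and "n > 0" and "weakly_n_absorbing R n J"
  shows "(\<forall>I. ideal I R \<and> I \<subseteq> J \<longrightarrow>
            weakly_n_absorbing (R Quot I) n ((\<lambda>x. I +>\<^bsub>R\<^esub> x) ` J))
       \<and> (\<forall>T. subring T R \<longrightarrow>
            weakly_n_absorbing (R\<lparr>carrier := T\<rparr>) n (J \<inter> T))
       \<and> (\<forall>S. mult_closed R S \<and> J \<inter> S = {} \<longrightarrow>
            weakly_n_absorbing (localization R S) n (loc_ideal R S J))"
  using weakly_n_absorbing_quotient[OF assms(1) _ _ assms(3)]
    weakly_n_absorbing_subring[OF assms(1) _ assms(3)]
    weakly_n_absorbing_localization[OF assms(1) _ _ assms(3)]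
  by blast

end
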